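(* Let $n,m\ge1$ be integers, $L>0$, $\lambda\in[0,1)$, and let $G_\alpha$ be the $3\times3$ matrix defined in the context. If $0<\alpha\le\min\Big\{\frac{(1-\lambda^2)^2}{35\lambda},\frac{\sqrt n}{\sqrt{8m}}\Big\}\frac1L$, then the spectral radius satisfies $\rho(G_\alpha)<1$; consequently $I_3-G_\alpha$ is invertible and $\sum_{k=0}^\infty G_\alpha^k=(I_3-G_\alpha)^{-1}$.
   Context: Expressions with $\lambda$ in a denominator are read as $+\infty$ when $\lambda=0$. The matrix $$G_\alpha:=\begin{bmatrix}\frac{1+\lambda^2}{2}&0&\frac{2\lambda^2\alpha^2L^2}{1-\lambda^2}\\ \frac9{4m}&1-\frac1{4m}&0\\ \frac{30.5}{1-\lambda^2}&\frac{97}8&\frac{1+\lambda^2}2\end{bmatrix}.$$ $\rho(\cdot)$ denotes spectral radius. *)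

theory Defs
  imports "Jordan_Normal_Form.Spectral_Radius"
begin

definition G_mat :: "real \<Rightarrow> real \<Rightarrow> real \<Rightarrow> nat \<Rightarrow> real mat" where
  "G_mat lam alpha L m = mat_of_rows_list 3
     [[(1 + lam^2) / 2, 0, 2 * lam^2 * alpha^2 * L^2 / (1 - lam^2)],
      [9 / (4 * real m), 1 - 1 / (4 * real m), 0],
      [30.5 / (1 - lam^2), 97 / 8, (1 + lam^2) / 2]]"

end

theory Submission
  imports Defs
begin

text \<open>
  A nonnegative matrix \<open>A\<close> admitting a positive weight vector \<open>v\<close> with \<open>A v \<le> c v\<close>
  componentwise has spectral radius at most \<open>c\<close>: an eigenvector \<open>x\<close> for \<open>\<mu>\<close> gives
  \<open>|\<mu>| |x| \<le> A |x|\<close>, and comparing \<open>|x|\<close> with \<open>v\<close> at the index where \<open>|x_i| / v_i\<close> is maximal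
  yields \<open>|\<mu>| \<le> c\<close>. The same weights bound \<open>(A^k)\<^sub>i\<^sub>j \<le> c^k v_i / v_j\<close>, so for \<open>c < 1\<close> the
  Neumann series converges entrywise and telescopes to \<open>(I - A)\<^sup>-\<^sup>1\<close>.
  For \<open>G\<^sub>\<alpha>\<close> the weights \<open>(1, 10, 305/(1-\<lambda>\<^sup>2)\<^sup>2)\<close> work.
\<close>

lemma index_mult_mat_sum:
  assumes "A \<in> carrier_mat n n" "B \<in> carrier_mat n n" "i < n" "j < n"
  shows "(A * B) $$ (i,j) = (\<Sum>l<n. A $$ (i,l) * B $$ (l,j))"
  using assms by (simp add: scalar_prod_def atLeast0LessThan)

locale nonneg_weighted_row_bound =
  fixes A :: "real mat" and n :: nat and v :: "nat \<Rightarrow> real" and c :: real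
  assumes carrier: "A \<in> carrier_mat n n"
    and nonneg: "\<And>i j. i < n \<Longrightarrow> j < n \<Longrightarrow> 0 \<le> A $$ (i,j)"
    and weight_pos: "\<And>i. i < n \<Longrightarrow> 0 < v i"
    and weighted_row_le: "\<And>i. i < n \<Longrightarrow> (\<Sum>j<n. A $$ (i,j) * v j) \<le> c * v i"
begin

lemma subinvariant_factor_le:
  assumes y_nonneg: "\<And>i. i < n \<Longrightarrow> 0 \<le> y i"
    and y_nonzero: "k < n" "y k \<noteq> 0"
    and subinvariant: "\<And>i. i < n \<Longrightarrow> r * y i \<le> (\<Sum>j<n. A $$ (i,j) * y j)"
  shows "r \<le> c"
proof -
  define R where "R = (\<lambda>i. y i / v i) ` {..<n}"
  have R: "finite R" "R \<noteq> {}" using y_nonzero(1) unfolding R_def by auto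
  define t where "t = Max R"
  obtain p where p: "p < n" "t = y p / v p" using Max_in[OF R] unfolding t_def R_def by auto
  have y_le: "y j \<le> t * v j" if "j < n" for j
  proof -
    have "y j / v j \<le> t" unfolding t_def R_def using R that by (intro Max_ge) (auto simp: R_def)
    then show ?thesis using weight_pos[OF that] by (simp add: field_simps)
  qed
  have "0 < y k / v k" using y_nonneg y_nonzero weight_pos[of k] by (simp add: order_less_le)
  also have "\<dots> \<le> t" unfolding t_def using R y_nonzero(1) by (intro Max_ge) (auto simp: R_def)
  finally have "0 < t" .
  then have y_p: "0 < y p" using p weight_pos[of p] by (simp add: zero_less_divide_iff)
  have "r * y p \<le> (\<Sum>j<n. A $$ (p,j) * y j)" using subinvariant p(1) .
  also have "\<dots> \<le> (\<Sum>j<n. A $$ (p,j) * (t * v j))"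
    using y_le nonneg p(1) by (intro sum_mono mult_left_mono) auto
  also have "\<dots> = t * (\<Sum>j<n. A $$ (p,j) * v j)" by (simp add: sum_distrib_left algebra_simps)
  also have "\<dots> \<le> t * (c * v p)" using weighted_row_le[OF p(1)] \<open>0 < t\<close> by simp
  also have "\<dots> = c * y p" using p weight_pos[of p] by (simp add: field_simps)
  finally show ?thesis using y_p by simp
qed

lemma eigenvalue_norm_le:
  assumes "eigenvalue (map_mat complex_of_real A) \<mu>"
  shows "cmod \<mu> \<le> c"
proof -
  let ?A = "map_mat complex_of_real A"
  from assms obtain x where x: "x \<in> carrier_vec n" "x \<noteq> 0\<^sub>v n" "?A *\<^sub>v x = \<mu> \<cdot>\<^sub>v x"
    unfolding eigenvalue_def eigenvector_def using carrier by auto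
  obtain k where k: "k < n" "x $ k \<noteq> 0"
    using x(1,2) by (metis carrier_vecD eq_vecI index_zero_vec)
  have "cmod \<mu> * cmod (x $ i) \<le> (\<Sum>j<n. A $$ (i,j) * cmod (x $ j))" if i: "i < n" for i
  proof -
    have "\<mu> * x $ i = (?A *\<^sub>v x) $ i" using x(1,3) i by simp
    also have "\<dots> = (\<Sum>j<n. complex_of_real (A $$ (i,j)) * x $ j)"
      using x(1) i carrier by (simp add: scalar_prod_def atLeast0LessThan)
    finally have "cmod \<mu> * cmod (x $ i) = cmod (\<Sum>j<n. complex_of_real (A $$ (i,j)) * x $ j)"
      by (metis norm_mult)
    also have "\<dots> \<le> (\<Sum>j<n. cmod (complex_of_real (A $$ (i,j)) * x $ j))" by (rule norm_sum)
    also have "\<dots> = (\<Sum>j<n. A $$ (i,j) * cmod (x $ j))"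
      using nonneg i by (intro sum.cong) (auto simp: norm_mult)
    finally show ?thesis .
  qed
  then show ?thesis using k by (intro subinvariant_factor_le[of "\<lambda>i. cmod (x $ i)" k]) auto
qed

lemma spectral_radius_le:
  assumes "0 < n"
  shows "spectral_radius (map_mat complex_of_real A) \<le> c"
proof -
  have "map_mat complex_of_real A \<in> carrier_mat n n" using carrier by simp
  from spectral_radius_mem_max(1)[OF this assms] obtain \<mu> where
    "spectral_radius (map_mat complex_of_real A) = cmod \<mu>" "eigenvalue (map_mat complex_of_real A) \<mu>"
    unfolding spectrum_def by auto
  then show ?thesis using eigenvalue_norm_le by simp
qed

lemma power_entry_nonneg:
  assumes "i < n" "j < n"
  shows "0 \<le> (A ^\<^sub>m k) $$ (i,j)"
  using assms
proof (induction k arbitrary: j)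
  case (Suc k)
  have "(A ^\<^sub>m Suc k) $$ (i,j) = (\<Sum>l<n. (A ^\<^sub>m k) $$ (i,l) * A $$ (l,j))"
    using index_mult_mat_sum[OF pow_carrier_mat[OF carrier] carrier Suc.prems] by simp
  then show ?case using Suc nonneg by (auto intro!: sum_nonneg mult_nonneg_nonneg)
qed (use carrier in auto)

lemma power_weighted_row_le:
  assumes "0 \<le> c" "i < n"
  shows "(\<Sum>j<n. (A ^\<^sub>m k) $$ (i,j) * v j) \<le> c^k * v i"
proof (induction k)
  case 0
  have "(\<Sum>j<n. (A ^\<^sub>m 0) $$ (i,j) * v j) = (\<Sum>j<n. if j = i then v j else 0)"
    using carrier assms(2) by (intro sum.cong) auto
  then show ?case using assms(2) by simp
next
  case (Suc k)
  let ?P = "A ^\<^sub>m k"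
  have "(A ^\<^sub>m Suc k) $$ (i,j) = (\<Sum>l<n. ?P $$ (i,l) * A $$ (l,j))" if "j < n" for j
    using index_mult_mat_sum[OF pow_carrier_mat[OF carrier] carrier assms(2) that] by simp
  then have "(\<Sum>j<n. (A ^\<^sub>m Suc k) $$ (i,j) * v j) = (\<Sum>j<n. \<Sum>l<n. ?P $$ (i,l) * A $$ (l,j) * v j)"
    by (intro sum.cong) (simp_all add: sum_distrib_right)
  also have "\<dots> = (\<Sum>l<n. ?P $$ (i,l) * (\<Sum>j<n. A $$ (l,j) * v j))"
    by (subst sum.swap) (simp add: sum_distrib_left mult.assoc)
  also have "\<dots> \<le> (\<Sum>l<n. ?P $$ (i,l) * (c * v l))"
    using assms power_entry_nonneg weighted_row_le by (intro sum_mono mult_left_mono) auto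
  also have "\<dots> = c * (\<Sum>l<n. ?P $$ (i,l) * v l)"
    by (simp add: sum_distrib_left algebra_simps)
  also have "\<dots> \<le> c * (c^k * v i)"
    using Suc assms(1) by (intro mult_left_mono)
  finally show ?case by simp
qed

lemma power_entry_le:
  assumes "0 \<le> c" "i < n" "j < n"
  shows "(A ^\<^sub>m k) $$ (i,j) \<le> c^k * (v i / v j)"
proof -
  have "(A ^\<^sub>m k) $$ (i,j) * v j \<le> (\<Sum>j<n. (A ^\<^sub>m k) $$ (i,j) * v j)"
    using assms power_entry_nonneg weight_pos
    by (intro member_le_sum mult_nonneg_nonneg) (auto intro: less_imp_le)
  also have "\<dots> \<le> c^k * v i" using power_weighted_row_le assms by blast
  finally show ?thesis using weight_pos[OF assms(3)] by (simp add: field_simps)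
qed

end

locale nonneg_weighted_row_contraction = nonneg_weighted_row_bound +
  assumes factor_nonneg: "0 \<le> c" and factor_less_1: "c < 1"
begin

lemma spectral_radius_less_1:
  assumes "0 < n"
  shows "spectral_radius (map_mat complex_of_real A) < 1"
  using spectral_radius_le[OF assms] factor_less_1 by simp

lemma summable_power_entry:
  assumes "i < n" "j < n"
  shows "summable (\<lambda>k. (A ^\<^sub>m k) $$ (i,j))"
proof (rule summable_comparison_test)
  show "\<exists>N. \<forall>k\<ge>N. norm ((A ^\<^sub>m k) $$ (i,j)) \<le> c^k * (v i / v j)"
    using assms factor_nonneg power_entry_nonneg power_entry_le by auto
  show "summable (\<lambda>k. c^k * (v i / v j))"
    using factor_nonneg factor_less_1 by (intro summable_mult2 summable_geometric) auto
qed

definition neumann_sum :: "real mat" where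
  "neumann_sum = mat n n (\<lambda>(i,j). \<Sum>k. (A ^\<^sub>m k) $$ (i,j))"

lemma neumann_sum_carrier: "neumann_sum \<in> carrier_mat n n"
  unfolding neumann_sum_def by simp

lemma neumann_sum_sums:
  assumes "i < n" "j < n"
  shows "(\<lambda>k. (A ^\<^sub>m k) $$ (i,j)) sums (neumann_sum $$ (i,j))"
  using summable_sums[OF summable_power_entry[OF assms]] assms unfolding neumann_sum_def by simp

lemma partial_neumann_sum_telescope:
  assumes "i < n" "j < n"
  shows "(\<Sum>k<N. (A ^\<^sub>m k * (1\<^sub>m n - A)) $$ (i,j)) = 1\<^sub>m n $$ (i,j) - (A ^\<^sub>m N) $$ (i,j)"
proof -
  have "A ^\<^sub>m k * (1\<^sub>m n - A) = A ^\<^sub>m k * 1\<^sub>m n - A ^\<^sub>m k * A" for k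
    using carrier by (intro mult_minus_distrib_mat[of _ n n]) auto
  then have "A ^\<^sub>m k * (1\<^sub>m n - A) = A ^\<^sub>m k - A ^\<^sub>m Suc k" for k
    using carrier by simp
  then have "(\<Sum>k<N. (A ^\<^sub>m k * (1\<^sub>m n - A)) $$ (i,j))
      = (\<Sum>k<N. (A ^\<^sub>m k) $$ (i,j) - (A ^\<^sub>m Suc k) $$ (i,j))"
    using assms carrier by (intro sum.cong) auto
  also have "\<dots> = (A ^\<^sub>m 0) $$ (i,j) - (A ^\<^sub>m N) $$ (i,j)"
    by (rule sum_lessThan_telescope')
  finally show ?thesis using carrier by simp
qed

lemma neumann_sum_left_inverse: "neumann_sum * (1\<^sub>m n - A) = 1\<^sub>m n"
proof (rule eq_matI)
  fix i j assume "i < dim_row (1\<^sub>m n :: real mat)" "j < dim_col (1\<^sub>m n :: real mat)"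
  then have ij: "i < n" "j < n" by auto
  let ?M = "1\<^sub>m n - A"
  have M: "?M \<in> carrier_mat n n" using carrier by auto
  have partial: "(\<Sum>k<N. (A ^\<^sub>m k * ?M) $$ (i,j))
      = (\<Sum>l<n. (\<Sum>k<N. (A ^\<^sub>m k) $$ (i,l)) * ?M $$ (l,j))" for N
    using index_mult_mat_sum[OF pow_carrier_mat[OF carrier] M ij]
    by (simp add: sum_distrib_right) (rule sum.swap)
  have "(\<lambda>N. \<Sum>k<N. (A ^\<^sub>m k * ?M) $$ (i,j)) \<longlonglongrightarrow> 1\<^sub>m n $$ (i,j) - 0"
    unfolding partial_neumann_sum_telescope[OF ij]
    using summable_LIMSEQ_zero[OF summable_power_entry[OF ij]] by (intro tendsto_intros)
  moreover have "(\<lambda>N. \<Sum>k<N. (A ^\<^sub>m k * ?M) $$ (i,j)) \<longlonglongrightarrow> (\<Sum>l<n. neumann_sum $$ (i,l) * ?M $$ (l,j))"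
    unfolding partial using neumann_sum_sums ij by (intro tendsto_intros) (auto simp: sums_def)
  ultimately have "(\<Sum>l<n. neumann_sum $$ (i,l) * ?M $$ (l,j)) = 1\<^sub>m n $$ (i,j)"
    using LIMSEQ_unique by fastforce
  then show "(neumann_sum * ?M) $$ (i,j) = 1\<^sub>m n $$ (i,j)"
    using index_mult_mat_sum[OF neumann_sum_carrier M ij] by simp
qed (use carrier neumann_sum_carrier in auto)

lemma neumann_sum_right_inverse: "(1\<^sub>m n - A) * neumann_sum = 1\<^sub>m n"
  by (rule mat_mult_left_right_inverse[OF neumann_sum_carrier _ neumann_sum_left_inverse])
    (use carrier in auto)

end

lemma nonneg_weighted_row_contraction_exists:
  assumes carrier: "A \<in> carrier_mat n n"
    and nonneg: "\<And>i j. i < n \<Longrightarrow> j < n \<Longrightarrow> 0 \<le> A $$ (i,j)"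
    and weight_pos: "\<And>i. i < n \<Longrightarrow> 0 < v i"
    and weighted_row_less: "\<And>i. i < n \<Longrightarrow> (\<Sum>j<n. A $$ (i,j) * v j) < v i"
  shows "\<exists>c. nonneg_weighted_row_contraction A n v c"
proof -
  define ratio where "ratio i = (\<Sum>j<n. A $$ (i,j) * v j) / v i" for i
  define c where "c = Max (insert 0 (ratio ` {..<n}))"
  have "ratio i < 1" if "i < n" for i
    using weighted_row_less[OF that] weight_pos[OF that] by (simp add: ratio_def)
  then have "c < 1" unfolding c_def by auto
  moreover have "0 \<le> c" unfolding c_def by simp
  moreover have "(\<Sum>j<n. A $$ (i,j) * v j) \<le> c * v i" if "i < n" for i
  proof -
    have "ratio i \<le> c" unfolding c_def using that by simp
    then show ?thesis using weight_pos[OF that] by (simp add: ratio_def field_simps)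
  qed
  ultimately show ?thesis
    using assms by (intro exI[of _ c] nonneg_weighted_row_contraction.intro
        nonneg_weighted_row_bound.intro nonneg_weighted_row_contraction_axioms.intro) auto
qed

lemma G_mat_carrier: "G_mat lam alpha L m \<in> carrier_mat 3 3"
  unfolding G_mat_def mat_of_rows_list_def carrier_mat_def
  by (simp only: dim_row_mat dim_col_mat list.size) simp

lemma G_mat_index:
  "G_mat lam alpha L m $$ (0,0) = (1 + lam^2) / 2"
  "G_mat lam alpha L m $$ (0,1) = 0"
  "G_mat lam alpha L m $$ (0,2) = 2 * lam^2 * alpha^2 * L^2 / (1 - lam^2)"
  "G_mat lam alpha L m $$ (1,0) = 9 / (4 * real m)"
  "G_mat lam alpha L m $$ (1,1) = 1 - 1 / (4 * real m)"
  "G_mat lam alpha L m $$ (1,2) = 0"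
  "G_mat lam alpha L m $$ (2,0) = 30.5 / (1 - lam^2)"
  "G_mat lam alpha L m $$ (2,1) = 97 / 8"
  "G_mat lam alpha L m $$ (2,2) = (1 + lam^2) / 2"
  unfolding G_mat_def mat_of_rows_list_def
  by (subst index_mat, simp, simp, simp only: split One_nat_def numeral_2_eq_2 nth_Cons_0 nth_Cons_Suc)+

lemma less_3_cases: "(i::nat) < 3 \<Longrightarrow> i = 0 \<or> i = 1 \<or> i = 2"
  by auto

lemma sum_lessThan_3: "(\<Sum>j<3. f j) = f (0::nat) + f 1 + (f 2 :: real)"
  by (simp add: numeral_3_eq_3 numeral_2_eq_2 lessThan_Suc)

lemma G_mat_nonneg:
  assumes "lam^2 < 1" "1 \<le> m" "i < 3" "j < 3"
  shows "0 \<le> G_mat lam alpha L m $$ (i,j)"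
proof -
  have "1 / (4 * real m) \<le> 1" using assms(2) by (simp add: field_simps)
  then show ?thesis
    using less_3_cases[OF assms(3)] less_3_cases[OF assms(4)] assms(1)
    by (auto simp: G_mat_index G_mat_index[unfolded One_nat_def])
qed

lemma step_size_coupling_le:
  fixes lam alpha L :: real
  assumes "0 < L" "0 \<le> lam" "lam < 1" "0 < alpha"
    and step: "lam > 0 \<Longrightarrow> alpha \<le> (1 - lam^2)^2 / (35 * lam) * (1 / L)"
  shows "2 * lam^2 * alpha^2 * L^2 / (1 - lam^2) \<le> 2 * (1 - lam^2)^3 / 1225"
proof (cases "lam = 0")
  case False
  define d where "d = 1 - lam^2"
  have d: "0 < d" using assms(2,3) by (simp add: d_def power_less_one_iff)
  have "lam * (alpha * L) \<le> d^2 / 35"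
    using step assms(1,2) False by (simp add: d_def field_simps)
  then have "(lam * (alpha * L))^2 \<le> (d^2 / 35)^2"
    using assms by (intro power_mono) auto
  then have "2 * lam^2 * alpha^2 * L^2 \<le> 2 * (d^4 / 1225)"
    by (simp add: power_mult_distrib power_divide power_mult[symmetric] mult_ac)
  then have "2 * lam^2 * alpha^2 * L^2 / d \<le> 2 * (d^4 / 1225) / d"
    by (rule divide_right_mono) (use d in simp)
  also have "\<dots> = 2 * d^3 / 1225" using d by (simp add: field_simps power_eq_if)
  finally show ?thesis unfolding d_def .
qed (simp add: power_le_one assms)

text \<open>
  The weights are forced row by row: the second row needs \<open>v\<^sub>1 > 9 v\<^sub>0\<close>, the third needs
  \<open>v\<^sub>2\<close> of order \<open>(1-\<lambda>\<^sup>2)\<^sup>-\<^sup>2\<close>, and then the first row asks for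
  \<open>G\<^sub>0\<^sub>2 \<cdot> 305/(1-\<lambda>\<^sup>2)\<^sup>2 < (1-\<lambda>\<^sup>2)/2\<close>, i.e. \<open>G\<^sub>0\<^sub>2 < (1-\<lambda>\<^sup>2)\<^sup>3/610\<close>, which is where the
  constant \<open>35\<close> (\<open>35\<^sup>2/2 = 612.5\<close>) in the step size comes from.
\<close>
definition G_weight :: "real \<Rightarrow> nat \<Rightarrow> real" where
  "G_weight lam i = (if i = 0 then 1 else if i = 1 then 10 else 305 / (1 - lam^2)^2)"

lemma G_mat_weighted_row_less:
  assumes lam: "0 \<le> lam" "lam < 1" and m: "1 \<le> m"
    and coupling: "2 * lam^2 * alpha^2 * L^2 / (1 - lam^2) \<le> 2 * (1 - lam^2)^3 / 1225"
    and i: "i < 3"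
  shows "(\<Sum>j<3. G_mat lam alpha L m $$ (i,j) * G_weight lam j) < G_weight lam i"
proof -
  define d where "d = 1 - lam^2"
  have d: "0 < d" "d \<le> 1" using lam by (auto simp: d_def power_less_one_iff)
  have diag: "(1 + lam^2) / 2 = 1 - d / 2" by (simp add: d_def field_simps)
  note G = G_mat_index[of lam alpha L m, unfolded diag, folded d_def]
  have weight: "G_weight lam 0 = 1" "G_weight lam 1 = 10" "G_weight lam 2 = 305 / d^2"
    by (simp_all add: G_weight_def d_def)
  note G_weight = G G[unfolded One_nat_def] weight weight[unfolded One_nat_def]
  consider "i = 0" | "i = 1" | "i = 2" using less_3_cases[OF i] by auto
  then show ?thesis
  proof cases
    case 1
    have "2 * lam^2 * alpha^2 * L^2 / d * (305 / d^2) \<le> 2 * d^3 / 1225 * (305 / d^2)"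
      using coupling d by (intro mult_right_mono) (auto simp: d_def)
    also have "\<dots> < d / 2" using d by (simp add: field_simps power_eq_if)
    finally show ?thesis using 1 by (simp add: sum_lessThan_3 G_weight)
  next
    case 2
    have "9 / (4 * real m) < 10 / (4 * real m)" using m by (intro divide_strict_right_mono) auto
    then show ?thesis using 2 m by (simp add: sum_lessThan_3 G_weight field_simps)
  next
    case 3
    have "30.5 * d + 121.25 * d^2 < 152.5 * d"
      using d by (simp add: power2_eq_square mult_left_le)
    then have "30.5 / d + 97 / 8 * 10 + (1 - d/2) * (305 / d^2) < 305 / d^2"
      using d by (simp add: field_simps power2_eq_square)
    then show ?thesis using 3 by (simp add: sum_lessThan_3 G_weight)
  qed
qed

theorem lemma14:
  fixes n m :: nat and L lam alpha :: real
  assumes "n \<ge> 1" and "m \<ge> 1" and "L > 0"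
    and "0 \<le> lam" and "lam < 1"
    and "0 < alpha"
    and "alpha \<le> sqrt (real n) / sqrt (8 * real m) * (1 / L)"
    and "lam > 0 \<Longrightarrow> alpha \<le> (1 - lam^2)^2 / (35 * lam) * (1 / L)"
  shows "spectral_radius (map_mat complex_of_real (G_mat lam alpha L m)) < 1
    \<and> invertible_mat (1\<^sub>m 3 - G_mat lam alpha L m)
    \<and> (\<exists>B \<in> carrier_mat 3 3.
          inverts_mat (1\<^sub>m 3 - G_mat lam alpha L m) B
        \<and> inverts_mat B (1\<^sub>m 3 - G_mat lam alpha L m)
        \<and> (\<forall>i < 3. \<forall>j < 3.
              (\<lambda>k. (G_mat lam alpha L m ^\<^sub>m k) $$ (i, j)) sums (B $$ (i, j))))"
proof -
  let ?G = "G_mat lam alpha L m"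
  have lam2: "lam^2 < 1" using assms(4,5) by (simp add: power_less_one_iff)
  note coupling = step_size_coupling_le[OF assms(3-6,8)]
  have "\<exists>c. nonneg_weighted_row_contraction ?G 3 (G_weight lam) c"
  proof (rule nonneg_weighted_row_contraction_exists[OF G_mat_carrier])
    show "0 \<le> ?G $$ (i,j)" if "i < 3" "j < 3" for i j
      using G_mat_nonneg[OF lam2 assms(2) that] .
    show "0 < G_weight lam i" for i
      using lam2 by (simp add: G_weight_def)
    show "(\<Sum>j<3. ?G $$ (i,j) * G_weight lam j) < G_weight lam i" if "i < 3" for i
      using G_mat_weighted_row_less[OF assms(4,5,2) coupling that] .
  qed
  then obtain c where "nonneg_weighted_row_contraction ?G 3 (G_weight lam) c" ..
  then interpret nonneg_weighted_row_contraction ?G 3 "G_weight lam" c .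
  have inverts: "inverts_mat (1\<^sub>m 3 - ?G) neumann_sum" "inverts_mat neumann_sum (1\<^sub>m 3 - ?G)"
    unfolding inverts_mat_def
    using neumann_sum_left_inverse neumann_sum_right_inverse neumann_sum_carrier carrier by auto
  then have "invertible_mat (1\<^sub>m 3 - ?G)"
    unfolding invertible_mat_def using carrier by auto
  with inverts show ?thesis
    using spectral_radius_less_1 neumann_sum_carrier neumann_sum_sums by auto
qed

end
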